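(* Let $\mathbf L$ be an algebraic lattice with an equa-interior operator $\eta$. If $x,z_1,\dots,z_k,a_1,\dots,a_k$ are coatoms of $\mathbf L$ such that $x\wedge z_i\le a_i$ properly for each $i=1,\dots,k$, then $\eta(x)\vee\bigwedge_{i=1}^k z_i=1$.
   Context: An equa-interior operator on an algebraic lattice $\mathbf L$ is a map $\eta:L\to L$ such that for all $x,y,z\in L$: (I1) $\eta(x)\le x$; (I2) $x\ge y$ implies $\eta(x)\ge\eta(y)$; (I3) $\eta^2(x)=\eta(x)$; (I4) $\eta(1)=1$; (I5) if $\eta(x)=u$ for all $x\in X\subseteq L$ then $\eta(\bigvee X)=u$; (I6) $\eta(x)\vee(y\wedge z)=(\eta(x)\vee y)\wedge(\eta(x)\vee z)$; (I7) the image $\eta(L)$ is the complete join subsemilattice of $L$ generated by the elements of $\eta(L)$ that are compact in $\mathbf L$; (I8) there is a compact element $w\in L$ with $\eta(w)=w$ such that the interval $[w,1]$ is isomorphic to the congruence lattice of a join semilattice with $0$. For coatoms, "$x\wedge z\le a$ properly" means $x\wedge z\le a$ while $x\not\le a$ and $z\not\le a$. *)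

theory Defs
  imports Main
begin

definition compact_el :: "'a::complete_lattice \<Rightarrow> bool" where
  "compact_el c \<longleftrightarrow> (\<forall>A. c \<le> Sup A \<longrightarrow> (\<exists>F. finite F \<and> F \<subseteq> A \<and> c \<le> Sup F))"

definition algebraic_lattice :: "'a::complete_lattice itself \<Rightarrow> bool" where
  "algebraic_lattice _ \<longleftrightarrow> (\<forall>x::'a. x = Sup {c. compact_el c \<and> c \<le> x})"

definition coatom :: "'a::complete_lattice \<Rightarrow> bool" where
  "coatom a \<longleftrightarrow> a < top \<and> (\<forall>y. a \<le> y \<longrightarrow> y = a \<or> y = top)"

definition join_semilattice_0 :: "'b set \<Rightarrow> ('b \<Rightarrow> 'b \<Rightarrow> 'b) \<Rightarrow> 'b \<Rightarrow> bool" where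
  "join_semilattice_0 S j e \<longleftrightarrow>
     (\<forall>a\<in>S. \<forall>b\<in>S. j a b \<in> S) \<and> e \<in> S \<and>
     (\<forall>a\<in>S. \<forall>b\<in>S. \<forall>c\<in>S. j (j a b) c = j a (j b c)) \<and>
     (\<forall>a\<in>S. \<forall>b\<in>S. j a b = j b a) \<and>
     (\<forall>a\<in>S. j a a = a) \<and>
     (\<forall>a\<in>S. j e a = a)"

definition semilattice_congruences :: "'b set \<Rightarrow> ('b \<Rightarrow> 'b \<Rightarrow> 'b) \<Rightarrow> ('b \<times> 'b) set set" where
  "semilattice_congruences S j =
     {\<theta>. equiv S \<theta> \<and>
          (\<forall>a b c d. (a, b) \<in> \<theta> \<longrightarrow> (c, d) \<in> \<theta> \<longrightarrow> (j a c, j b d) \<in> \<theta>)}"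

definition order_iso_to_sets :: "'a::order set \<Rightarrow> 'c set set \<Rightarrow> bool" where
  "order_iso_to_sets A B \<longleftrightarrow>
     (\<exists>f. bij_betw f A B \<and> (\<forall>x\<in>A. \<forall>y\<in>A. x \<le> y \<longleftrightarrow> f x \<subseteq> f y))"

definition equa_interior :: "'b itself \<Rightarrow> ('a::complete_lattice \<Rightarrow> 'a) \<Rightarrow> bool" where
  "equa_interior _ \<eta> \<longleftrightarrow>
     (\<forall>x. \<eta> x \<le> x) \<and>
     (\<forall>x y. y \<le> x \<longrightarrow> \<eta> y \<le> \<eta> x) \<and>
     (\<forall>x. \<eta> (\<eta> x) = \<eta> x) \<and>
     \<eta> top = top \<and>
     (\<forall>X u. X \<noteq> {} \<longrightarrow> (\<forall>x\<in>X. \<eta> x = u) \<longrightarrow> \<eta> (Sup X) = u) \<and>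
     (\<forall>x y z. sup (\<eta> x) (inf y z) = inf (sup (\<eta> x) y) (sup (\<eta> x) z)) \<and>
     range \<eta> = {Sup C | C. C \<subseteq> {c \<in> range \<eta>. compact_el c}} \<and>
     (\<exists>w. compact_el w \<and> \<eta> w = w \<and>
        (\<exists>(S::'b set) j e. join_semilattice_0 S j e \<and>
           order_iso_to_sets {w..top} (semilattice_congruences S j)))"

end

theory Submission
  imports Defs
begin

text \<open>By (I6), \<open>\<eta> x \<squnion> -\<close> distributes over finite meets, so it suffices that
  \<open>\<eta> x \<squnion> z\<^sub>i = \<top>\<close> for each \<open>i\<close>. Otherwise \<open>\<eta> x \<le> z\<^sub>i\<close> since \<open>z\<^sub>i\<close> is a coatom, hence
  \<open>\<eta> x \<le> x \<sqinter> z\<^sub>i \<le> a\<^sub>i\<close>. If also \<open>\<eta> a\<^sub>i \<le> x\<close>, then \<open>\<eta> x = \<eta> a\<^sub>i\<close> and (I5) gives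
  \<open>\<eta> x = \<eta> (x \<squnion> a\<^sub>i) = \<eta> \<top> = \<top>\<close>; if not, \<open>\<eta> a\<^sub>i \<squnion> x = \<top>\<close> and (I6) at \<open>\<eta> a\<^sub>i\<close> yields
  \<open>z\<^sub>i \<le> \<eta> a\<^sub>i \<squnion> (x \<sqinter> z\<^sub>i) \<le> a\<^sub>i\<close>.\<close>

locale interior_op =
  fixes \<eta> :: "'a::complete_lattice \<Rightarrow> 'a"
  assumes deflationary: "\<eta> x \<le> x"
    and mono: "y \<le> x \<Longrightarrow> \<eta> y \<le> \<eta> x"
    and idempotent: "\<eta> (\<eta> x) = \<eta> x"
    and top_fixed: "\<eta> top = top"
    and Sup_const: "X \<noteq> {} \<Longrightarrow> (\<forall>x\<in>X. \<eta> x = u) \<Longrightarrow> \<eta> (Sup X) = u"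
    and sup_inf_distrib: "sup (\<eta> x) (inf y z) = inf (sup (\<eta> x) y) (sup (\<eta> x) z)"

lemma equa_interior_imp_interior_op:
  assumes "equa_interior TYPE('b) \<eta>"
  shows "interior_op \<eta>"
  using assms unfolding equa_interior_def by unfold_locales simp_all

lemma coatom_sup_eq_top:
  fixes x y :: "'a::complete_lattice"
  assumes "coatom x" and "\<not> y \<le> x"
  shows "sup x y = top"
  using assms unfolding coatom_def by (metis sup.cobounded1 sup.cobounded2)

lemma sup_Inf_eq_top_if_distrib:
  fixes u :: "'a::complete_lattice"
  assumes distrib: "\<And>y z. sup u (inf y z) = inf (sup u y) (sup u z)"
    and "finite F" and "\<forall>y\<in>F. sup u y = top"
  shows "sup u (Inf F) = top"
  using assms(2,3)
proof (induction F rule: finite_induct)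
  case empty
  then show ?case by simp
next
  case (insert y F)
  then show ?case by (simp add: distrib)
qed

context interior_op
begin

lemma interior_sup_eq_if_below_each_other:
  assumes "\<eta> x \<le> y" and "\<eta> y \<le> x"
  shows "\<eta> (sup x y) = \<eta> x"
proof -
  have "\<eta> x \<le> \<eta> y" using mono[OF assms(1)] idempotent by metis
  moreover have "\<eta> y \<le> \<eta> x" using mono[OF assms(2)] idempotent by metis
  ultimately have "\<eta> y = \<eta> x" by simp
  then show ?thesis using Sup_const[of "{x, y}" "\<eta> x"] by simp
qed

lemma sup_coatom_eq_top:
  assumes "coatom x" and "coatom z" and "coatom a"
    and "inf x z \<le> a" and "\<not> x \<le> a" and "\<not> z \<le> a"
  shows "sup (\<eta> x) z = top"
proof (rule ccontr)
  assume "sup (\<eta> x) z \<noteq> top"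
  with \<open>coatom z\<close> have "\<eta> x \<le> z"
    unfolding coatom_def by (metis sup.cobounded2 sup.orderI sup_commute)
  with deflationary \<open>inf x z \<le> a\<close> have "\<eta> x \<le> a" by (meson le_inf_iff order_trans)
  have "x < top" using \<open>coatom x\<close> unfolding coatom_def by blast
  show False
  proof (cases "\<eta> a \<le> x")
    case True
    have "sup x a = top"
      using coatom_sup_eq_top[OF \<open>coatom a\<close> \<open>\<not> x \<le> a\<close>] by (simp add: sup_commute)
    with interior_sup_eq_if_below_each_other[OF \<open>\<eta> x \<le> a\<close> True] top_fixed have "\<eta> x = top"
      by simp
    with deflationary[of x] \<open>x < top\<close> show False by simp
  next
    case False
    with \<open>coatom x\<close> have "sup (\<eta> a) x = top" by (simp add: coatom_sup_eq_top sup_commute)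
    then have "sup (\<eta> a) z = sup (\<eta> a) (inf x z)" by (simp add: sup_inf_distrib)
    also have "\<dots> \<le> a" using deflationary \<open>inf x z \<le> a\<close> by simp
    finally show False using \<open>\<not> z \<le> a\<close> by simp
  qed
qed

end

theorem theorem7p3:
  fixes \<eta> :: "'a::complete_lattice \<Rightarrow> 'a"
    and x :: 'a and z a :: "nat \<Rightarrow> 'a" and k :: nat
  assumes "algebraic_lattice TYPE('a)"
    and "equa_interior TYPE('b) \<eta>"
    and "coatom x"
    and "\<forall>i\<in>{1..k}. coatom (z i) \<and> coatom (a i)"
    and "\<forall>i\<in>{1..k}. inf x (z i) \<le> a i \<and> \<not> x \<le> a i \<and> \<not> z i \<le> a i"
  shows "sup (\<eta> x) (Inf (z ` {1..k})) = top"
proof -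
  interpret interior_op \<eta>
    using assms(2) by (rule equa_interior_imp_interior_op)
  have "\<forall>y\<in>z ` {1..k}. sup (\<eta> x) y = top"
    using sup_coatom_eq_top[OF assms(3)] assms(4,5) by blast
  then show ?thesis
    by (intro sup_Inf_eq_top_if_distrib) (simp_all add: sup_inf_distrib)
qed

end
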